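(* Let $G$, $H$, $H'$ be termgraphs over a signature $\Omega$ and let $\gamma:|G|\to|H|$, $\gamma':|G|\to|H'|$, $\eta:|H|\to|H'|$ be functions such that $\gamma'=\eta\circ\gamma$. Let $\Gamma$ be a set of nodes of $G$. If $\gamma$ is strictly graphic on $\Gamma$ and $\gamma'$ is graphic on $\Gamma$, then $\eta$ is graphic on $\gamma(\Gamma)$.
   Context: A signature $\Omega$ is a set of operation symbols, each $\omega\in\Omega$ with an arity $\mathrm{ar}(\omega)\in\mathbb{N}$. For a set $X$, $X^*$ is the set of strings over $X$, and for $f:X\to Y$, $f^*:X^*\to Y^*$ is $f^*(x_1\ldots x_n)=f(x_1)\ldots f(x_n)$. A termgraph (graph) $G=(\mathcal{N}_G,\mathcal{D}_G,\mathcal{L}_G,\mathcal{S}_G)$ consists of a set of nodes $\mathcal{N}_G$ (written $|G|$), a subset $\mathcal{D}_G\subseteq\mathcal{N}_G$ of labeled nodes, a labeling function $\mathcal{L}_G:\mathcal{D}_G\to\Omega$ and a successor function $\mathcal{S}_G:\mathcal{D}_G\to\mathcal{N}_G^*$ such that for each labeled node $n$ the length of $\mathcal{S}_G(n)$ equals $\mathrm{ar}(\mathcal{L}_G(n))$; nodes not in $\mathcal{D}_G$ are unlabeled. For graphs $G,H$, a function $\gamma:|G|\to|H|$ and a node $n$ of $G$: $\gamma$ is graphic at $n$ if either $n$ is unlabeled, or both $n$ and $\gamma(n)$ are labeled with $\mathcal{L}_H(\gamma(n))=\mathcal{L}_G(n)$ and $\mathcal{S}_H(\gamma(n))=\gamma^*(\mathcal{S}_G(n))$.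 $\gamma$ is strictly graphic at $n$ if either both $n$ and $\gamma(n)$ are unlabeled, or both are labeled with $\mathcal{L}_H(\gamma(n))=\mathcal{L}_G(n)$ and $\mathcal{S}_H(\gamma(n))=\gamma^*(\mathcal{S}_G(n))$. For a set $\Gamma$ of nodes of $G$, $\gamma$ is (strictly) graphic on $\Gamma$ if it is (strictly) graphic at every node of $\Gamma$. *)

theory Defs
  imports Main
begin

text \<open>Label and successor
functions are total HOL functions but only meaningful on labeled nodes.\<close>

record ('n, 'f) termgraph =
  nodes :: "'n set"
  dnodes :: "'n set"
  lab :: "'n \<Rightarrow> 'f"
  succ :: "'n \<Rightarrow> 'n list"

definition termgraph :: "('f \<Rightarrow> nat) \<Rightarrow> ('n, 'f) termgraph \<Rightarrow> bool" where
  "termgraph ar G \<longleftrightarrow> dnodes G \<subseteq> nodes G \<and>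
     (\<forall>n \<in> dnodes G. set (succ G n) \<subseteq> nodes G \<and> length (succ G n) = ar (lab G n))"

definition graphic_at ::
  "('n, 'f) termgraph \<Rightarrow> ('m, 'f) termgraph \<Rightarrow> ('n \<Rightarrow> 'm) \<Rightarrow> 'n \<Rightarrow> bool" where
  "graphic_at G H \<gamma> n \<longleftrightarrow> n \<notin> dnodes G \<or>
     (n \<in> dnodes G \<and> \<gamma> n \<in> dnodes H \<and> lab H (\<gamma> n) = lab G n \<and>
      succ H (\<gamma> n) = map \<gamma> (succ G n))"

definition strictly_graphic_at ::
  "('n, 'f) termgraph \<Rightarrow> ('m, 'f) termgraph \<Rightarrow> ('n \<Rightarrow> 'm) \<Rightarrow> 'n \<Rightarrow> bool" where
  "strictly_graphic_at G H \<gamma> n \<longleftrightarrow> (n \<notin> dnodes G \<and> \<gamma> n \<notin> dnodes H) \<or>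
     (n \<in> dnodes G \<and> \<gamma> n \<in> dnodes H \<and> lab H (\<gamma> n) = lab G n \<and>
      succ H (\<gamma> n) = map \<gamma> (succ G n))"

definition graphic_on ::
  "('n, 'f) termgraph \<Rightarrow> ('m, 'f) termgraph \<Rightarrow> ('n \<Rightarrow> 'm) \<Rightarrow> 'n set \<Rightarrow> bool" where
  "graphic_on G H \<gamma> \<Gamma> \<longleftrightarrow> (\<forall>n \<in> \<Gamma>. graphic_at G H \<gamma> n)"

definition strictly_graphic_on ::
  "('n, 'f) termgraph \<Rightarrow> ('m, 'f) termgraph \<Rightarrow> ('n \<Rightarrow> 'm) \<Rightarrow> 'n set \<Rightarrow> bool" where
  "strictly_graphic_on G H \<gamma> \<Gamma> \<longleftrightarrow> (\<forall>n \<in> \<Gamma>. strictly_graphic_at G H \<gamma> n)"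

end

theory Submission
  imports Defs
begin

text \<open>Strictness transports the labelledness of a node n to \<gamma> n. At an unlabelled n, \<gamma> n is
  unlabelled and \<eta> is trivially graphic there; at a labelled n, \<gamma> n carries the label of n and
  successors \<gamma>* (succ n), so the graphic conditions for \<gamma>' = \<eta> \<circ> \<gamma> at n are exactly those
  for \<eta> at \<gamma> n.\<close>

lemma graphic_at_factor:
  assumes strict: "strictly_graphic_at G H \<gamma> n"
    and graphic: "graphic_at G H' \<gamma>' n"
    and factor: "n \<in> dnodes G \<Longrightarrow> \<forall>x \<in> insert n (set (succ G n)). \<gamma>' x = \<eta> (\<gamma> x)"
  shows "graphic_at H H' \<eta> (\<gamma> n)"
proof (cases "n \<in> dnodes G")
  case False
  then show ?thesis using strict unfolding strictly_graphic_at_def graphic_at_def by auto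
next
  case True
  with factor have "\<gamma>' n = \<eta> (\<gamma> n)"
    and "map \<gamma>' (succ G n) = map \<eta> (map \<gamma> (succ G n))" by simp_all
  then show ?thesis
    using True strict graphic unfolding strictly_graphic_at_def graphic_at_def by auto
qed

lemma graphic_on_factor:
  assumes "termgraph ar G"
    and "\<forall>x \<in> nodes G. \<gamma>' x = \<eta> (\<gamma> x)"
    and "\<Gamma> \<subseteq> nodes G"
    and "strictly_graphic_on G H \<gamma> \<Gamma>"
    and "graphic_on G H' \<gamma>' \<Gamma>"
  shows "graphic_on H H' \<eta> (\<gamma> ` \<Gamma>)"
  unfolding graphic_on_def
proof
  fix m assume "m \<in> \<gamma> ` \<Gamma>"
  then obtain n where n: "n \<in> \<Gamma>" and m: "m = \<gamma> n" by blast
  have strict: "strictly_graphic_at G H \<gamma> n" and graphic: "graphic_at G H' \<gamma>' n"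
    using assms(4,5) n unfolding strictly_graphic_on_def graphic_on_def by auto
  have "insert n (set (succ G n)) \<subseteq> nodes G" if "n \<in> dnodes G"
    using assms(1,3) n that unfolding termgraph_def by blast
  with assms(2) have "n \<in> dnodes G \<Longrightarrow> \<forall>x \<in> insert n (set (succ G n)). \<gamma>' x = \<eta> (\<gamma> x)"
    by blast
  with graphic_at_factor[OF strict graphic] m show "graphic_at H H' \<eta> m" by simp
qed

theorem lemma1:
  fixes ar :: "'f \<Rightarrow> nat"
    and G :: "('a, 'f) termgraph" and H :: "('b, 'f) termgraph" and H' :: "('c, 'f) termgraph"
    and \<gamma> :: "'a \<Rightarrow> 'b" and \<gamma>' :: "'a \<Rightarrow> 'c" and \<eta> :: "'b \<Rightarrow> 'c"
    and \<Gamma> :: "'a set"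
  assumes "termgraph ar G" and "termgraph ar H" and "termgraph ar H'"
    and "\<gamma> ` nodes G \<subseteq> nodes H" and "\<gamma>' ` nodes G \<subseteq> nodes H'" and "\<eta> ` nodes H \<subseteq> nodes H'"
    and "\<forall>x \<in> nodes G. \<gamma>' x = \<eta> (\<gamma> x)"
    and "\<Gamma> \<subseteq> nodes G"
    and "strictly_graphic_on G H \<gamma> \<Gamma>"
    and "graphic_on G H' \<gamma>' \<Gamma>"
  shows "graphic_on H H' \<eta> (\<gamma> ` \<Gamma>)"
  using graphic_on_factor assms(1,7-10) .

end
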